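(* Let $\Bbbk$ be a field, $n\ge2$, and $R=\Bbbk[x]/\langle x^n\rangle$. The following cones in $\mathbb V$ are equal: (1) ${\operatorname{B_{\mathbb Q}}}(R)$; (2) $D=\operatorname{pos}\{\pi_d: d \text{ an } R\text{-degree sequence}\}$; (3) the cone $F$ defined as the intersection of: $\{\epsilon_{i,j}\ge0\}$ for $i\in\{0,1,2\}$, $j\in\mathbb Z$; $\{\alpha_{0,k}\ge0\}$ for $k\in\mathbb Z$; $\{\theta_k\ge0\}$ for $k\in\mathbb Z$; $\{\eta_k\ge0\}$ for $k\in\mathbb Z$; $\{\alpha_{i,k}=0\}$ for all $i\ge1$, $k\in\mathbb Z$; and $\{\eta_\infty=0\}$.
   Context: $\mathbb V$: the $\mathbb Q$-vector space of column-finite rational matrices $v=(v_{i,j})$, $i\in\mathbb N$, $j\in\mathbb Z$. For a finitely generated graded $R$-module $M$, $\beta^R(M)\in\mathbb V$ has entries $\beta^R_{i,j}(M)=\dim_\Bbbk\operatorname{Tor}_i^R(M,\Bbbk)_j$; ${\operatorname{B_{\mathbb Q}}}(R)$ is the set of finite $\mathbb Q_{\ge0}$-combinations of Betti diagrams of finitely generated graded $R$-modules; $\operatorname{pos}$ denotes finite $\mathbb Q_{\ge0}$-combinations. An $R$-degree sequence is either $(d_0,\infty,\infty,\ldots)$ with $d_0\in\mathbb Z$, or an integer sequence $(d_0,d_1,d_2,\ldots)$ with $d_0<d_1<d_0+n$ and $d_{i+2}-d_i=n$ for all $i\ge0$. For such $d$, $(\pi_d)_{i,j}=1$ if $j=d_i\ne\infty$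 and $0$ otherwise. Functionals on $v\in\mathbb V$: $\epsilon_{i,j}(v)=v_{i,j}$; $\alpha_{i,k}(v)=\epsilon_{i,k}(v)-\epsilon_{i+2,k+n}(v)$; $\theta_k(v)=\sum_{j\le k}\epsilon_{2,j}(v)-\sum_{j\le k-n+1}\epsilon_{1,j}(v)$; $\eta_k(v)=\sum_{j\le k}(\epsilon_{1,j}(v)-\epsilon_{2,j+1}(v))$; $\eta_\infty(v)=\sum_{j\in\mathbb Z}(\epsilon_{1,j}(v)-\epsilon_{2,j+1}(v))$ (all sums finite by column-finiteness). *)

theory Defs
  imports "Jordan_Normal_Form.DL_Rank" "Jordan_Normal_Form.Matrix_Kernel"
begin

text \<open>A finitely generated graded R-module M is encoded, after choosing a basis of
each graded piece, by its graded dimensions m j = dim_k M_j (finitely many nonzero)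
and the matrices X j of multiplication by x from M_j to M_(j+1), subject to x^n = 0.\<close>

type_synonym 'k grmod = "(int \<Rightarrow> nat) \<times> (int \<Rightarrow> 'k mat)"

definition gdim :: "'k grmod \<Rightarrow> int \<Rightarrow> nat" where
  "gdim M j = fst M j"

definition xmat :: "'k grmod \<Rightarrow> int \<Rightarrow> 'k mat" where
  "xmat M j = snd M j"

fun xpow :: "'k::field grmod \<Rightarrow> int \<Rightarrow> nat \<Rightarrow> 'k mat" where
  "xpow M j 0 = 1\<^sub>m (gdim M j)"
| "xpow M j (Suc r) = xmat M (j + int r) * xpow M j r"

definition fg_graded_module :: "nat \<Rightarrow> 'k::field grmod \<Rightarrow> bool" where
  "fg_graded_module n M \<longleftrightarrow>
     finite {j. gdim M j \<noteq> 0}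
   \<and> (\<forall>j. xmat M j \<in> carrier_mat (gdim M (j + 1)) (gdim M j))
   \<and> (\<forall>j. xpow M j n = 0\<^sub>m (gdim M (j + int n)) (gdim M j))"

definition img_dim :: "'k::field mat \<Rightarrow> nat" where
  "img_dim A = vec_space.rank (dim_row A) A"

text \<open>The minimal graded free resolution of k over R is
  0 <- R <-x- R(-1) <-x^(n-1)- R(-n) <-x- R(-n-1) <-x^(n-1)- R(-2n) <- ...
i.e. F_i = R(-tdeg n i) with tdeg n i = (i div 2) n + (i mod 2), and the differential
F_i -> F_(i-1) is multiplication by x^(dexp n i), dexp n i = 1 for i odd and n-1 for i even.
Tor_i(M,k) is the i-th homology of M tensor F, whose degree j part in homological
degree i is M_(j - tdeg n i).\<close>

definition tdeg :: "nat \<Rightarrow> nat \<Rightarrow> int" where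
  "tdeg n i = int ((i div 2) * n + i mod 2)"

definition dexp :: "nat \<Rightarrow> nat \<Rightarrow> nat" where
  "dexp n i = (if odd i then 1 else n - 1)"

text \<open>dim_k Tor_i^R(M,k)_j = dim ker(d_i in degree j) - dim im(d_(i+1) in degree j)\<close>
definition betti_num :: "nat \<Rightarrow> 'k::field grmod \<Rightarrow> nat \<Rightarrow> int \<Rightarrow> nat" where
  "betti_num n M i j =
     (let a = j - tdeg n i;
          e = dexp n (Suc i);
          kd = (if i = 0 then gdim M a else kernel_dim (xpow M a (dexp n i)))
      in kd - img_dim (xpow M (a - int e) e))"

definition betti :: "nat \<Rightarrow> 'k::field grmod \<Rightarrow> nat \<Rightarrow> int \<Rightarrow> rat" where
  "betti n M = (\<lambda>i j. rat_of_nat (betti_num n M i j))"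

type_synonym vmat = "nat \<Rightarrow> int \<Rightarrow> rat"

definition Vspace :: "vmat set" where
  "Vspace = {v. \<forall>i. finite {j. v i j \<noteq> 0}}"

definition pos :: "vmat set \<Rightarrow> vmat set" where
  "pos S = {v. \<exists>A c. finite A \<and> A \<subseteq> S \<and> (\<forall>s\<in>A. c s \<ge> (0::rat)) \<and>
                    v = (\<lambda>i j. \<Sum>s\<in>A. c s * s i j)}"

definition BQ :: "'k::field itself \<Rightarrow> nat \<Rightarrow> vmat set" where
  "BQ (_::'k itself) n = pos {betti n (M :: 'k grmod) | M. fg_graded_module n M}"

text \<open>R-degree sequences; None stands for infinity\<close>
definition degree_seq :: "nat \<Rightarrow> (nat \<Rightarrow> int option) \<Rightarrow> bool" where
  "degree_seq n d \<longleftrightarrow>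
     (\<exists>d0. d 0 = Some d0 \<and> (\<forall>i\<ge>1. d i = None))
   \<or> (\<exists>e. (\<forall>i. d i = Some (e i)) \<and> e 0 < e 1 \<and> e 1 < e 0 + int n
          \<and> (\<forall>i. e (i + 2) - e i = int n))"

definition pi_seq :: "(nat \<Rightarrow> int option) \<Rightarrow> vmat" where
  "pi_seq d = (\<lambda>i j. if d i = Some j then 1 else 0)"

definition Dcone :: "nat \<Rightarrow> vmat set" where
  "Dcone n = pos {pi_seq d | d. degree_seq n d}"

definition rsum :: "vmat \<Rightarrow> nat \<Rightarrow> int set \<Rightarrow> rat" where
  "rsum v i S = (\<Sum>j\<in>{j\<in>S. v i j \<noteq> 0}. v i j)"

definition alpha :: "nat \<Rightarrow> nat \<Rightarrow> int \<Rightarrow> vmat \<Rightarrow> rat" where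
  "alpha n i k v = v i k - v (i + 2) (k + int n)"

definition theta :: "nat \<Rightarrow> int \<Rightarrow> vmat \<Rightarrow> rat" where
  "theta n k v = rsum v 2 {..k} - rsum v 1 {..k - int n + 1}"

definition eta :: "int \<Rightarrow> vmat \<Rightarrow> rat" where
  "eta k v = rsum v 1 {..k} - rsum v 2 {..k + 1}"

definition eta_inf :: "vmat \<Rightarrow> rat" where
  "eta_inf v = rsum v 1 UNIV - rsum v 2 UNIV"

definition Fcone :: "nat \<Rightarrow> vmat set" where
  "Fcone n = {v \<in> Vspace.
      (\<forall>i\<le>2. \<forall>j. v i j \<ge> 0)
    \<and> (\<forall>k. alpha n 0 k v \<ge> 0)
    \<and> (\<forall>k. theta n k v \<ge> 0)
    \<and> (\<forall>k. eta k v \<ge> 0)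
    \<and> (\<forall>i\<ge>1. \<forall>k. alpha n i k v = 0)
    \<and> eta_inf v = 0}"

end

theory Submission
  imports Defs
begin

(* We prove the cyclic chain of inclusions  BQ(R) <= F <= D <= BQ(R).

   * BQ(R) <= F.  F is a convex cone, so it suffices that every Betti diagram
     beta(M) lies in F.  Writing r_s(j) for the rank of x^s : M_j -> M_(j+s), the
     rows 0, 1, 2 of beta(M) are explicit in these ranks, and rows i >= 3 repeat
     rows i-2 shifted by n (2-periodicity of the resolution of k).  Summing the
     differences telescopically gives closed forms for eta_k and theta_k whose
     nonnegativity is Sylvester's resp. Frobenius' rank inequality for the
     powers of x; eta_infinity vanishes because M is bounded.
   * F <= D.  Greedy decomposition: if rows 1, 2 of v in F vanish, v is a sum of
     pi_d with d = (d_0, oo, ...); otherwise the minimal degrees d_1, d_2 of rows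
     1, 2 satisfy d_1 < d_2 < d_1 + n, and subtracting c * pi_d for the degree
     sequence (d_2 - n, d_1, d_2, ...) with the largest admissible c stays in F
     and shrinks the supports of rows 1, 2.
   * D <= BQ(R).  Every pi_d is the Betti diagram of a shifted cyclic module
     k[x]/(x^a)(-d_0) with a = d_1 - d_0 (a = n when d_1 = infinity). *)

section \<open>Rank inequalities for matrices over a field\<close>

context vec_space begin

lemma subspace_fin_dim:
  assumes W: "subspace class_ring W V"
  shows "vectorspace.fin_dim class_ring (vs W)"
proof -
  interpret VW: vectorspace class_ring "vs W" using subspace_is_vs[OF W] .
  have sub: "submodule class_ring W V" using W by (simp add: subspace_def)
  have bound: "finite S \<and> card S \<le> n" if "S \<subseteq> carrier (vs W) \<and> VW.lin_indpt S" for S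
  proof -
    from that have SW: "S \<subseteq> W" and li: "VW.lin_indpt S" by auto
    have WV: "W \<subseteq> carrier V" using sub by (simp add: submodule_def)
    have "lin_indpt S" using li span_li_not_depend(2)[OF SW sub] by simp
    moreover have "S \<subseteq> carrier V" using SW WV by auto
    ultimately show ?thesis using li_le_dim[OF fin_dim] dim_is_n by auto
  qed
  have "\<exists>A. finite A \<and> maximal A (\<lambda>S. S \<subseteq> carrier (vs W) \<and> VW.lin_indpt S)"
    by (rule maximal_exists[OF bound, where B="{}"]) (auto simp: VW.lin_dep_def)
  then obtain A where A: "finite A" "maximal A (\<lambda>S. S \<subseteq> carrier (vs W) \<and> VW.lin_indpt S)"
    by blast
  have "VW.gen_set A" by (rule VW.max_li_is_gen[OF A(2)])
  moreover have "A \<subseteq> carrier (vs W)" using A(2) by (simp add: maximal_def)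
  ultimately show ?thesis using A(1) unfolding VW.fin_dim_def by blast
qed

end

definition sub_dim :: "nat \<Rightarrow> 'a::field vec set \<Rightarrow> nat" where
  "sub_dim m S = vectorspace.dim class_ring ((module_vec TYPE('a) m)\<lparr>carrier := S\<rparr>)"

definition is_subspace :: "nat \<Rightarrow> 'a::field vec set \<Rightarrow> bool" where
  "is_subspace m S = subspace class_ring S (module_vec TYPE('a) m)"

definition col_image :: "'a::field mat \<Rightarrow> 'a vec set" where
  "col_image A = (\<lambda>x. A *\<^sub>v x) ` carrier_vec (dim_col A)"

lemma is_subspaceI:
  fixes S :: "'a::field vec set"
  assumes "S \<subseteq> carrier_vec m" "0\<^sub>v m \<in> S"
    "\<And>v w. v \<in> S \<Longrightarrow> w \<in> S \<Longrightarrow> v + w \<in> S"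
    "\<And>c v. v \<in> S \<Longrightarrow> c \<cdot>\<^sub>v v \<in> S"
  shows "is_subspace m S"
proof -
  interpret V: vec_space "TYPE('a)" m .
  show ?thesis unfolding is_subspace_def subspace_def
    using assms V.vectorspace_axioms
    by (auto simp: submodule_def V.module_axioms)
qed

lemma is_subspace_col_image:
  assumes A: "A \<in> carrier_mat nr nc" shows "is_subspace nr (col_image A)"
proof (rule is_subspaceI)
  show "col_image A \<subseteq> carrier_vec nr" using A by (auto simp: col_image_def)
  show "0\<^sub>v nr \<in> col_image A" unfolding col_image_def using A
    by (intro image_eqI[of _ _ "0\<^sub>v nc"]) auto
  fix v w assume "v \<in> col_image A" "w \<in> col_image A"
  then obtain x y where x: "x \<in> carrier_vec nc" "v = A *\<^sub>v x"
    and y: "y \<in> carrier_vec nc" "w = A *\<^sub>v y"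
    using A by (auto simp: col_image_def)
  show "v + w \<in> col_image A" unfolding col_image_def using A x y
    by (intro image_eqI[of _ _ "x + y"]) (auto simp: mult_add_distrib_mat_vec)
next
  fix c v assume "v \<in> col_image A"
  then obtain x where x: "x \<in> carrier_vec nc" "v = A *\<^sub>v x"
    using A by (auto simp: col_image_def)
  show "c \<cdot>\<^sub>v v \<in> col_image A" unfolding col_image_def using A x
    by (intro image_eqI[of _ _ "c \<cdot>\<^sub>v x"]) (auto simp: mult_mat_vec)
qed

lemma is_subspace_kernel:
  assumes A: "A \<in> carrier_mat nr nc" shows "is_subspace nc (mat_kernel A)"
  by (rule is_subspaceI) (use A in \<open>auto simp: mat_kernel_def mult_add_distrib_mat_vec mult_mat_vec\<close>)

lemma is_subspace_Int:
  assumes "is_subspace m X" "is_subspace m Y" shows "is_subspace m (X \<inter> Y)"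
proof -
  interpret V: vec_space "TYPE('a)" m .
  have "submodule class_ring X V.V" "submodule class_ring Y V.V"
    using assms by (auto simp: is_subspace_def subspace_def)
  then show ?thesis by (intro is_subspaceI) (auto simp: submodule_def)
qed

lemma is_subspace_carrier: "is_subspace m (carrier_vec m :: 'a::field vec set)"
  by (rule is_subspaceI) auto

lemma rank_nullity_restrict:
  fixes B :: "'a::field mat"
  assumes B: "B \<in> carrier_mat p m" and W: "is_subspace m W"
  shows "sub_dim m W = sub_dim p ((\<lambda>v. B *\<^sub>v v) ` W) + sub_dim m (W \<inter> mat_kernel B)"
proof -
  interpret V: vec_space "TYPE('a)" m .
  interpret P: vec_space "TYPE('a)" p .
  have Ws: "subspace class_ring W V.V" using W by (simp add: is_subspace_def)
  interpret VW: vectorspace class_ring "V.vs W" using V.subspace_is_vs[OF Ws] .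
  have Wc: "W \<subseteq> carrier_vec m" using Ws by (auto simp: subspace_def submodule_def)
  interpret L: linear_map class_ring "V.vs W" "P.V" "\<lambda>v. B *\<^sub>v v"
  proof (unfold_locales)
    show "(\<lambda>v. B *\<^sub>v v) \<in> LinearCombinations.module_hom class_ring (V.vs W) P.V"
      unfolding LinearCombinations.module_hom_def using Wc B
      by (auto simp: mult_mat_vec intro!: mult_add_distrib_mat_vec[OF B] dest: subsetD)
  qed
  have "vectorspace.dim class_ring (P.vs L.imT)
      + vectorspace.dim class_ring ((V.vs W)\<lparr>carrier := L.kerT\<rparr>) = VW.dim"
    by (rule L.rank_nullity[OF V.subspace_fin_dim[OF Ws]])
  moreover have "L.imT = (\<lambda>v. B *\<^sub>v v) ` W" by (simp add: L.im_def)
  moreover have "L.kerT = W \<inter> mat_kernel B"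
    using Wc B by (auto simp: L.ker_def mat_kernel_def)
  ultimately show ?thesis unfolding sub_dim_def by simp
qed

lemma sub_dim_mono:
  fixes X :: "'a::field vec set"
  assumes X: "is_subspace m X" and W: "is_subspace m W" and XW: "X \<subseteq> W"
  shows "sub_dim m X \<le> sub_dim m W"
proof -
  interpret V: vec_space "TYPE('a)" m .
  have Ws: "subspace class_ring W V.V" and Xs: "subspace class_ring X V.V"
    using W X by (simp_all add: is_subspace_def)
  interpret VW: vectorspace class_ring "V.vs W" using V.subspace_is_vs[OF Ws] .
  have "subspace class_ring X (V.vs W)" by (rule V.nested_subspaces[OF Ws Xs XW])
  from VW.subspace_dim[OF this V.subspace_fin_dim[OF Ws]] V.subspace_fin_dim[OF Xs]
  show ?thesis unfolding sub_dim_def by simp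
qed

lemma img_dim_sub_dim:
  assumes A: "A \<in> carrier_mat nr nc" shows "img_dim A = sub_dim nr (col_image A)"
proof -
  interpret V: vec_space "TYPE('a)" nr .
  have "V.col_space A = col_image A" using V.col_space_eq[OF A] A by (auto simp: col_image_def)
  moreover have "V.rank A = vectorspace.dim class_ring (V.vs (V.col_space A))"
    by (simp add: V.rank_def V.col_space_def)
  ultimately show ?thesis unfolding img_dim_def sub_dim_def using A by simp
qed

lemma kernel_dim_sub_dim:
  assumes A: "A \<in> carrier_mat nr nc" shows "kernel_dim A = sub_dim nc (mat_kernel A)"
proof -
  interpret K: kernel nr nc A using A by unfold_locales
  show ?thesis unfolding sub_dim_def by simp
qed

lemma col_image_mult:
  assumes A: "A \<in> carrier_mat m q" and B: "B \<in> carrier_mat p m"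
  shows "(\<lambda>v. B *\<^sub>v v) ` col_image A = col_image (B * A)"
  using A B by (auto simp: col_image_def image_image assoc_mult_mat_vec)

lemma rank_nullity_mat:
  fixes A :: "'a::field mat" assumes A: "A \<in> carrier_mat nr nc"
  shows "img_dim A + kernel_dim A = nc"
proof -
  interpret V: vec_space "TYPE('a)" nc .
  have whole: "module_vec TYPE('a) nc\<lparr>carrier := carrier_vec nc\<rparr> = module_vec TYPE('a) nc"
  proof -
    have "module_vec TYPE('a) nc\<lparr>carrier := carrier (module_vec TYPE('a) nc)\<rparr>
        = module_vec TYPE('a) nc" by simp
    then show ?thesis by (simp only: V.cV)
  qed
  have "sub_dim nc (carrier_vec nc :: 'a vec set) = nc"
    unfolding sub_dim_def whole using V.dim_is_n by simp
  moreover have "sub_dim nc (carrier_vec nc :: 'a vec set)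
      = sub_dim nr (col_image A) + sub_dim nc (carrier_vec nc \<inter> mat_kernel A)"
    using rank_nullity_restrict[OF A is_subspace_carrier] A by (simp add: col_image_def)
  moreover have "carrier_vec nc \<inter> mat_kernel A = mat_kernel A"
    using A by (auto simp: mat_kernel_def)
  ultimately show ?thesis using img_dim_sub_dim[OF A] kernel_dim_sub_dim[OF A] by simp
qed

lemma sylvester_rank_ineq:
  assumes A: "A \<in> carrier_mat m q" and B: "B \<in> carrier_mat p m"
  shows "img_dim A \<le> img_dim (B * A) + kernel_dim B"
proof -
  have BA: "B * A \<in> carrier_mat p q" using A B by simp
  have "sub_dim m (col_image A)
      = sub_dim p (col_image (B*A)) + sub_dim m (col_image A \<inter> mat_kernel B)"
    using rank_nullity_restrict[OF B is_subspace_col_image[OF A]] col_image_mult[OF A B] by simp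
  moreover have "sub_dim m (col_image A \<inter> mat_kernel B) \<le> sub_dim m (mat_kernel B)"
    by (rule sub_dim_mono)
      (auto intro: is_subspace_Int is_subspace_col_image[OF A] is_subspace_kernel[OF B])
  ultimately show ?thesis
    using img_dim_sub_dim[OF A] img_dim_sub_dim[OF BA] kernel_dim_sub_dim[OF B] by simp
qed

lemma frobenius_rank_ineq:
  assumes A: "A \<in> carrier_mat m q" and B: "B \<in> carrier_mat p m" and C: "C \<in> carrier_mat q r"
  shows "img_dim (B * A) + img_dim (A * C) \<le> img_dim A + img_dim (B * A * C)"
proof -
  have BA: "B * A \<in> carrier_mat p q" and AC: "A * C \<in> carrier_mat m r"
    and BAC: "B * A * C \<in> carrier_mat p r" using A B C by auto
  have assoc: "B * (A * C) = B * A * C" using A B C by (simp add: assoc_mult_mat)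
  have rnA: "sub_dim m (col_image A)
      = sub_dim p (col_image (B*A)) + sub_dim m (col_image A \<inter> mat_kernel B)"
    using rank_nullity_restrict[OF B is_subspace_col_image[OF A]] col_image_mult[OF A B] by simp
  have rnAC: "sub_dim m (col_image (A*C))
      = sub_dim p (col_image (B*A*C)) + sub_dim m (col_image (A*C) \<inter> mat_kernel B)"
    using rank_nullity_restrict[OF B is_subspace_col_image[OF AC]] col_image_mult[OF AC B] assoc
    by simp
  have "col_image (A*C) = (\<lambda>v. A *\<^sub>v v) ` col_image C" using col_image_mult[OF C A] by simp
  also have "\<dots> \<subseteq> col_image A" using A C by (auto simp: col_image_def)
  finally have "col_image (A*C) \<subseteq> col_image A" .
  then have "sub_dim m (col_image (A*C) \<inter> mat_kernel B) \<le> sub_dim m (col_image A \<inter> mat_kernel B)"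
    by (intro sub_dim_mono) (auto intro: is_subspace_Int is_subspace_col_image[OF A]
        is_subspace_col_image[OF AC] is_subspace_kernel[OF B])
  with rnA rnAC show ?thesis
    using img_dim_sub_dim[OF A] img_dim_sub_dim[OF BA] img_dim_sub_dim[OF AC]
      img_dim_sub_dim[OF BAC] by simp
qed

lemma img_dim_zero: "img_dim (0\<^sub>m nr nc :: 'a::field mat) = 0"
proof -
  interpret V: vec_space "TYPE('a)" nr .
  show ?thesis unfolding img_dim_def using V.rank_0I by simp
qed

lemma img_dim_one: "img_dim (1\<^sub>m k :: 'a::field mat) = k"
  using rank_nullity_mat[of "1\<^sub>m k :: 'a mat" k k] kernel_one_mat(1)[of k, where 'a='a]
  unfolding kernel_dim_def by simp

lemma img_dim_le_rows:
  assumes A: "A \<in> carrier_mat nr nc" shows "img_dim A \<le> nr"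
proof -
  have "sub_dim nr (col_image A) \<le> sub_dim nr (carrier_vec nr :: 'a vec set)"
    by (rule sub_dim_mono[OF is_subspace_col_image[OF A] is_subspace_carrier])
      (use A in \<open>auto simp: col_image_def\<close>)
  also have "col_image (1\<^sub>m nr :: 'a mat) = carrier_vec nr"
    by (auto simp: col_image_def intro!: image_eqI)
  then have "sub_dim nr (carrier_vec nr :: 'a vec set) = nr"
    using img_dim_sub_dim[OF one_carrier_mat[of nr, where 'a='a]] img_dim_one[where 'a='a] by simp
  finally show ?thesis unfolding img_dim_sub_dim[OF A] .
qed

definition row_supp :: "vmat \<Rightarrow> nat \<Rightarrow> int set" where
  "row_supp v i = {j. v i j \<noteq> 0}"

lemma rsum_finite_support:
  assumes "finite F" "row_supp v i \<subseteq> F"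
  shows "rsum v i S = (\<Sum>j\<in>S \<inter> F. v i j)"
  unfolding rsum_def
  by (rule sum.mono_neutral_left) (use assms in \<open>auto simp: row_supp_def\<close>)

lemma rsum_atMost_step:
  assumes "finite (row_supp v i)"
  shows "rsum v i {..k} = rsum v i {..k - 1} + v i k"
proof -
  let ?F = "insert k (row_supp v i)"
  have split: "{..k} \<inter> ?F = insert k ({..k - 1} \<inter> ?F)" by auto
  have "rsum v i {..k} = (\<Sum>j\<in>{..k} \<inter> ?F. v i j)"
    by (rule rsum_finite_support) (use assms in auto)
  also have "\<dots> = v i k + (\<Sum>j\<in>{..k - 1} \<inter> ?F. v i j)" unfolding split
    by (rule sum.insert) (use assms in auto)
  also have "(\<Sum>j\<in>{..k - 1} \<inter> ?F. v i j) = rsum v i {..k - 1}"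
    by (rule rsum_finite_support[symmetric]) (use assms in auto)
  finally show ?thesis by simp
qed

lemma rsum_zero: "(\<And>j. j \<in> S \<Longrightarrow> v i j = 0) \<Longrightarrow> rsum v i S = 0"
  unfolding rsum_def by (rule sum.neutral) auto

lemma rsum_nonzero_witness: "rsum v i S \<noteq> 0 \<Longrightarrow> \<exists>j\<in>S. v i j \<noteq> 0"
  using rsum_zero by blast

lemma rsum_UNIV_eq_atMost: "(\<And>j. j > k \<Longrightarrow> v i j = 0) \<Longrightarrow> rsum v i UNIV = rsum v i {..k}"
  unfolding rsum_def by (rule sum.cong) (auto simp: not_le[symmetric])

lemma rsum_linear:
  assumes "finite (row_supp v i)" "finite (row_supp w i)"
  shows "rsum (\<lambda>i j. a * v i j + b * w i j) i S = a * rsum v i S + b * rsum w i S"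
proof -
  let ?F = "row_supp v i \<union> row_supp w i"
  have "rsum (\<lambda>i j. a * v i j + b * w i j) i S = (\<Sum>j\<in>S \<inter> ?F. a * v i j + b * w i j)"
    by (rule rsum_finite_support) (use assms in \<open>auto simp: row_supp_def\<close>)
  also have "\<dots> = a * (\<Sum>j\<in>S \<inter> ?F. v i j) + b * (\<Sum>j\<in>S \<inter> ?F. w i j)"
    by (simp add: sum.distrib sum_distrib_left)
  also have "(\<Sum>j\<in>S \<inter> ?F. v i j) = rsum v i S"
    by (rule rsum_finite_support[symmetric]) (use assms in auto)
  also have "(\<Sum>j\<in>S \<inter> ?F. w i j) = rsum w i S"
    by (rule rsum_finite_support[symmetric]) (use assms in auto)
  finally show ?thesis .
qed

lemma rsum_ge_entry:
  assumes "\<And>j. v i j \<ge> 0" "finite (row_supp v i)" "j0 \<in> S"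
  shows "rsum v i S \<ge> v i j0"
proof (cases "v i j0 = 0")
  case True then show ?thesis
    unfolding rsum_def using assms(1) by (simp add: sum_nonneg)
next
  case False
  have fin: "finite {j \<in> S. v i j \<noteq> 0}"
    using assms(2) by (rule rev_finite_subset) (auto simp: row_supp_def)
  have "v i j0 = (\<Sum>j\<in>{j0}. v i j)" by simp
  also have "\<dots> \<le> rsum v i S" unfolding rsum_def
    by (rule sum_mono2[OF fin]) (use False assms in auto)
  finally show ?thesis .
qed

text \<open>A function on the integers with f k = f (k - 1) for all k is constant. Applied to the
  difference of two functions with equal increments, it shows they differ by a constant.\<close>
lemma int_fun_const:
  fixes f :: "int \<Rightarrow> 'a"
  assumes "\<And>k. f k = f (k - 1)"
  shows "f a = f b"
proof -
  have "f i = f b" for i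
  proof (induction i rule: int_induct[where k=b])
    case base then show ?case by simp
  next
    case (step1 i) then show ?case using assms[of "i+1"] by simp
  next
    case (step2 i) then show ?case using assms[of i] by simp
  qed
  then show ?thesis .
qed

lemma sum_int_interval_first: "(a::int) \<le> b \<Longrightarrow> sum f {a..b} = f a + sum f {a+1..b}"
proof -
  assume "a \<le> b"
  then have "{a..b} = insert a {a+1..b}" by auto
  then show ?thesis by simp
qed

lemma sum_int_interval_last: "(a::int) \<le> b \<Longrightarrow> sum f {a..b} = sum f {a..b-1} + f b"
proof -
  assume "a \<le> b"
  then have "{a..b} = insert b {a..b-1}" by auto
  then show ?thesis by (simp add: add.commute)
qed

section \<open>Betti numbers of graded R-modules in terms of ranks of powers of x\<close>

lemma xpow_carrier:
  assumes fg: "fg_graded_module n M"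
  shows "xpow M j r \<in> carrier_mat (gdim M (j + int r)) (gdim M j)"
proof (induction r)
  case 0 then show ?case by simp
next
  case (Suc r)
  have "xmat M (j + int r) \<in> carrier_mat (gdim M (j + int r + 1)) (gdim M (j + int r))"
    using fg by (simp add: fg_graded_module_def)
  from mult_carrier_mat[OF this Suc.IH] show ?case by (simp add: ac_simps)
qed

lemma xpow_add:
  assumes fg: "fg_graded_module n M"
  shows "xpow M j (r + s) = xpow M (j + int r) s * xpow M j r"
proof (induction s)
  case 0 then show ?case using xpow_carrier[OF fg, of j r] by simp
next
  case (Suc s)
  have X: "xmat M (j + int (r + s)) \<in> carrier_mat (gdim M (j + int (r+s) + 1)) (gdim M (j + int (r+s)))"
    using fg by (simp add: fg_graded_module_def)
  have A: "xpow M (j + int r) s \<in> carrier_mat (gdim M (j + int (r+s))) (gdim M (j + int r))"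
    using xpow_carrier[OF fg, of "j + int r" s] by (simp add: add.assoc)
  have B: "xpow M j r \<in> carrier_mat (gdim M (j + int r)) (gdim M j)" using xpow_carrier[OF fg] .
  have "xpow M j (r + Suc s) = xmat M (j + int (r + s)) * (xpow M (j + int r) s * xpow M j r)"
    using Suc.IH by simp
  also have "\<dots> = (xmat M (j + int (r + s)) * xpow M (j + int r) s) * xpow M j r"
    using assoc_mult_mat[OF X A B] by simp
  also have "xmat M (j + int (r + s)) * xpow M (j + int r) s = xpow M (j + int r) (Suc s)"
    by (simp add: add.assoc)
  finally show ?case .
qed

text \<open>Rows i \<ge> 1 of a Betti diagram are 2-periodic up to a shift by n, because the minimal
  resolution of k is.\<close>
lemma betti_periodic: "i \<ge> 1 \<Longrightarrow> betti n M (i + 2) (k + int n) = betti n M i k"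
proof -
  assume i: "i \<ge> 1"
  have t: "tdeg n (i + 2) = tdeg n i + int n" unfolding tdeg_def by (simp add: algebra_simps)
  have d: "dexp n (i + 2) = dexp n i" "dexp n (Suc (i + 2)) = dexp n (Suc i)"
    by (auto simp: dexp_def)
  show ?thesis using i unfolding betti_def betti_num_def Let_def t d by simp
qed

lemma tdeg_0: "tdeg n 0 = 0" and tdeg_1: "tdeg n 1 = 1" and tdeg_2: "tdeg n 2 = int n"
  by (auto simp: tdeg_def)

locale graded_module =
  fixes n :: nat and M :: "'k::field grmod"
  assumes fg: "fg_graded_module n M" and n2: "n \<ge> 2"
begin

definition xrank :: "nat \<Rightarrow> int \<Rightarrow> nat" where "xrank s j = img_dim (xpow M j s)"
definition xnull :: "nat \<Rightarrow> int \<Rightarrow> nat" where "xnull s j = kernel_dim (xpow M j s)"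

lemma xrank_xnull: "xrank s j + xnull s j = gdim M j"
  unfolding xrank_def xnull_def by (rule rank_nullity_mat[OF xpow_carrier[OF fg]])

lemma xnull_rat: "(of_nat (xnull s j) :: rat) = of_nat (gdim M j) - of_nat (xrank s j)"
  using xrank_xnull[of s j] by (simp flip: of_nat_add)

lemma xrank_zero: "gdim M j = 0 \<Longrightarrow> xrank s j = 0"
  using xrank_xnull[of s j] by simp

lemma xnull_zero: "gdim M j = 0 \<Longrightarrow> xnull s j = 0"
  using xrank_xnull[of s j] by simp

lemma xrank_le_target: "xrank s j \<le> gdim M (j + int s)"
  unfolding xrank_def by (rule img_dim_le_rows[OF xpow_carrier[OF fg]])

lemma xrank_n: "xrank n j = 0"
  using fg unfolding xrank_def fg_graded_module_def by (simp add: img_dim_zero)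

lemma xrank_sylvester: "xrank r j \<le> xrank (r + s) j + xnull s (j + int r)"
  unfolding xrank_def xnull_def xpow_add[OF fg]
  by (rule sylvester_rank_ineq[OF xpow_carrier[OF fg] xpow_carrier[OF fg]])

lemma xrank_frobenius:
  "xrank (r + s) j + xrank (r + 1) (j - 1) \<le> xrank r j + xrank (r + s + 1) (j - 1)"
proof -
  have C: "xpow M (j - 1) 1 \<in> carrier_mat (gdim M j) (gdim M (j - 1))"
    using xpow_carrier[OF fg, of "j - 1" 1] by simp
  have AB: "xpow M (j + int r) s * xpow M j r = xpow M j (r + s)" using xpow_add[OF fg] by simp
  have AC: "xpow M j r * xpow M (j - 1) 1 = xpow M (j - 1) (r + 1)"
    using xpow_add[OF fg, of "j - 1" 1 r] by (simp add: add.commute)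
  have ABC: "xpow M j (r + s) * xpow M (j - 1) 1 = xpow M (j - 1) (r + s + 1)"
    using xpow_add[OF fg, of "j - 1" 1 "r + s"] by (simp add: add.commute)
  show ?thesis
    using frobenius_rank_ineq[OF xpow_carrier[OF fg, of j r] xpow_carrier[OF fg, of "j + int r" s] C]
    unfolding xrank_def AB AC ABC by simp
qed

lemma betti_row0: "betti n M 0 j = of_nat (gdim M j) - of_nat (xrank 1 (j - 1))"
proof -
  have "xrank 1 (j - 1) \<le> gdim M j" using xrank_le_target[of 1 "j - 1"] by simp
  then show ?thesis
    unfolding betti_def betti_num_def by (simp add: tdeg_0 dexp_def xrank_def of_nat_diff)
qed

lemma betti_row1:
  "betti n M 1 j = of_nat (gdim M (j - 1)) - of_nat (xrank 1 (j - 1)) - of_nat (xrank (n - 1) (j - int n))"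
proof -
  have e: "j - int n + int (n - 1) = j - 1" "j - 1 - int (n - 1) = j - int n" using n2 by simp_all
  have "xrank (n - 1) (j - int n) \<le> xrank (n - 1 + 1) (j - int n) + xnull 1 (j - int n + int (n - 1))"
    by (rule xrank_sylvester)
  then have le: "xrank (n - 1) (j - int n) \<le> xnull 1 (j - 1)" using n2 xrank_n e by simp
  have "betti_num n M 1 j = xnull 1 (j - 1) - xrank (n - 1) (j - int n)"
    unfolding betti_num_def Let_def tdeg_1 using n2 by (simp add: dexp_def xnull_def xrank_def e)
  then show ?thesis unfolding betti_def using le xrank_xnull[of 1 "j - 1"]
    by (simp add: of_nat_diff algebra_simps flip: of_nat_add)
qed

lemma betti_row2:
  "betti n M 2 j = of_nat (gdim M (j - int n)) - of_nat (xrank (n - 1) (j - int n)) - of_nat (xrank 1 (j - int n - 1))"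
proof -
  have "xrank 1 (j - int n - 1) \<le> xrank (1 + (n - 1)) (j - int n - 1) + xnull (n - 1) (j - int n - 1 + int 1)"
    by (rule xrank_sylvester)
  then have le: "xrank 1 (j - int n - 1) \<le> xnull (n - 1) (j - int n)" using n2 xrank_n by simp
  have d: "dexp n 2 = n - 1" "dexp n (Suc 2) = 1" by (auto simp: dexp_def)
  have "betti_num n M 2 j = xnull (n - 1) (j - int n) - xrank 1 (j - int n - 1)"
    unfolding betti_num_def Let_def tdeg_2 d using n2 by (simp add: xnull_def xrank_def del: xpow.simps)
  then show ?thesis unfolding betti_def using le xrank_xnull[of "n - 1" "j - int n"]
    by (simp add: of_nat_diff algebra_simps flip: of_nat_add)
qed

lemma betti_vanish: "gdim M (j - tdeg n i) = 0 \<Longrightarrow> betti n M i j = 0"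
  unfolding betti_def betti_num_def Let_def using xnull_zero[unfolded xnull_def]
  by (auto intro: le_trans[OF diff_le_self])

lemma finite_module_support: "finite {j. gdim M j \<noteq> 0}"
  using fg by (simp add: fg_graded_module_def)

lemma module_bounds: obtains L U where "\<And>j. j < L \<or> U < j \<Longrightarrow> gdim M j = 0"
proof (cases "{j. gdim M j \<noteq> 0} = {}")
  case True then show ?thesis using that by auto
next
  case False
  let ?S = "{j. gdim M j \<noteq> 0}"
  have "gdim M j = 0" if "j < Min ?S \<or> Max ?S < j" for j
    using that finite_module_support by (auto dest: Min_le Max_ge)
  then show ?thesis using that by blast
qed

lemma betti_row_finite: "finite (row_supp (betti n M) i)"
proof -
  have "row_supp (betti n M) i \<subseteq> (\<lambda>x. x + tdeg n i) ` {j. gdim M j \<noteq> 0}"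
  proof
    fix j assume "j \<in> row_supp (betti n M) i"
    then have "gdim M (j - tdeg n i) \<noteq> 0" using betti_vanish by (auto simp: row_supp_def)
    then show "j \<in> (\<lambda>x. x + tdeg n i) ` {j. gdim M j \<noteq> 0}"
      by (intro image_eqI[of _ _ "j - tdeg n i"]) auto
  qed
  then show ?thesis using finite_module_support by (meson finite_imageI finite_subset)
qed

end

section \<open>Betti diagrams lie in the cone F\<close>

context graded_module begin

text \<open>Closed forms of eta_k and theta_k on the Betti diagram of M, as functions of the
  ranks of powers of x.\<close>
definition eta_formula :: "int \<Rightarrow> rat" where
  "eta_formula k = (\<Sum>i\<in>{k+2-int n..k-1}. of_nat (xnull 1 i))
     - of_nat (xrank 1 (k+1-int n)) + of_nat (xrank (n-1) (k+1-int n))"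

definition theta_formula :: "int \<Rightarrow> rat" where
  "theta_formula k = of_nat (xrank 1 (k - int n)) - (\<Sum>i\<in>{k-2*int n+2..k-int n}. of_nat (xrank (n-1) i))"

lemma eta_formula_step: "eta_formula k - eta_formula (k - 1) = betti n M 1 k - betti n M 2 (k + 1)"
proof -
  let ?f = "\<lambda>i. (of_nat (xnull 1 i) :: rat)"
  have le: "k+1-int n \<le> k-1" using n2 by simp
  have shift: "k - 1 + 2 - int n = k + 1 - int n" "k - 1 - 1 = k - 2" "k - 1 + 1 - int n = k - int n"
    by simp_all
  have first: "(\<Sum>i\<in>{k+1-int n..k-1}. ?f i) = ?f (k+1-int n) + (\<Sum>i\<in>{k+2-int n..k-1}. ?f i)"
    using sum_int_interval_first[OF le, of ?f] by (simp add: algebra_simps)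
  have last: "(\<Sum>i\<in>{k+1-int n..k-1}. ?f i) = (\<Sum>i\<in>{k+1-int n..k-2}. ?f i) + ?f (k-1)"
    using sum_int_interval_last[OF le, of ?f] by (simp add: algebra_simps)
  have b2: "betti n M 2 (k+1) = of_nat (gdim M (k + 1 - int n)) - of_nat (xrank (n - 1) (k + 1 - int n))
      - of_nat (xrank 1 (k - int n))"
    using betti_row2[of "k+1"] by (simp add: algebra_simps)
  show ?thesis unfolding eta_formula_def shift
    using first last betti_row1[of k] b2 xnull_rat[of 1 "k-1"] xnull_rat[of 1 "k+1-int n"] by simp
qed

lemma theta_formula_step:
  "theta_formula k - theta_formula (k - 1) = betti n M 2 k - betti n M 1 (k - int n + 1)"
proof -
  let ?f = "\<lambda>i. (of_nat (xrank (n-1) i) :: rat)"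
  have le: "k-2*int n+1 \<le> k-int n" using n2 by simp
  have shift: "k - 1 - int n = k - int n - 1" "k - 1 - 2 * int n + 2 = k - 2 * int n + 1" by simp_all
  have first: "(\<Sum>i\<in>{k-2*int n+1..k-int n}. ?f i)
      = ?f (k-2*int n+1) + (\<Sum>i\<in>{k-2*int n+2..k-int n}. ?f i)"
    using sum_int_interval_first[OF le, of ?f] by (simp add: algebra_simps)
  have last: "(\<Sum>i\<in>{k-2*int n+1..k-int n}. ?f i) = (\<Sum>i\<in>{k-2*int n+1..k-int n-1}. ?f i) + ?f (k-int n)"
    using sum_int_interval_last[OF le, of ?f] .
  have b1: "betti n M 1 (k - int n + 1) = of_nat (gdim M (k - int n)) - of_nat (xrank 1 (k - int n))
      - of_nat (xrank (n - 1) (k - 2 * int n + 1))"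
    using betti_row1[of "k - int n + 1"] by (simp add: algebra_simps)
  show ?thesis unfolding theta_formula_def shift using first last b1 betti_row2[of k] by simp
qed

lemma xrank_sylvester_chain:
  "s \<ge> 1 \<Longrightarrow> xrank 1 K \<le> xrank s K + (\<Sum>i\<in>{K+1..K+int s-1}. xnull 1 i)"
proof (induction s rule: nat_induct_at_least)
  case base then show ?case by simp
next
  case (Suc s)
  have le: "K + 1 \<le> K + int s" using Suc.hyps by simp
  have "(\<Sum>i\<in>{K+1..K+int (Suc s)-1}. xnull 1 i) = (\<Sum>i\<in>{K+1..K+int s-1}. xnull 1 i) + xnull 1 (K + int s)"
    using sum_int_interval_last[OF le, of "xnull 1"] by simp
  then show ?case using Suc.IH xrank_sylvester[of s K 1] by simp
qed

lemma eta_formula_nonneg: "eta_formula k \<ge> 0"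
proof -
  have "xrank 1 (k+1-int n) \<le> xrank (n-1) (k+1-int n) + (\<Sum>i\<in>{k+1-int n+1..k+1-int n+int (n-1)-1}. xnull 1 i)"
    by (rule xrank_sylvester_chain) (use n2 in simp)
  moreover have "k+1-int n+1 = k+2-int n" "k+1-int n+int (n-1)-1 = k - 1" using n2 by simp_all
  ultimately have "xrank 1 (k+1-int n) \<le> xrank (n-1) (k+1-int n) + (\<Sum>i\<in>{k+2-int n..k-1}. xnull 1 i)"
    by simp
  then have "(of_nat (xrank 1 (k+1-int n)) :: rat)
      \<le> of_nat (xrank (n-1) (k+1-int n)) + (\<Sum>i\<in>{k+2-int n..k-1}. of_nat (xnull 1 i))"
    by (simp only: of_nat_le_iff flip: of_nat_add of_nat_sum)
  then show ?thesis unfolding eta_formula_def by simp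
qed

lemma xrank_frobenius_chain:
  "s \<le> n - 1 \<Longrightarrow> xrank (s+1) (K - int s) + (\<Sum>i\<in>{K-int s+1..K}. xrank (n-1) i) \<le> xrank 1 K"
proof (induction s)
  case 0 then show ?case by simp
next
  case (Suc s)
  have e: "s + 1 + (n - 2 - s) = n - 1" "n - 1 + 1 = n" using Suc.prems n2 by auto
  have "xrank (s + 1 + (n - 2 - s)) (K - int s) + xrank (s + 1 + 1) (K - int s - 1)
      \<le> xrank (s + 1) (K - int s) + xrank (s + 1 + (n - 2 - s) + 1) (K - int s - 1)"
    by (rule xrank_frobenius)
  then have step: "xrank (n-1) (K - int s) + xrank (Suc s + 1) (K - int (Suc s)) \<le> xrank (s + 1) (K - int s)"
    unfolding e xrank_n by (simp add: algebra_simps)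
  have le: "K - int s \<le> K" by simp
  have "K - int (Suc s) + 1 = K - int s" by simp
  then have "(\<Sum>i\<in>{K-int (Suc s)+1..K}. xrank (n-1) i) = xrank (n-1) (K - int s) + (\<Sum>i\<in>{K-int s+1..K}. xrank (n-1) i)"
    using sum_int_interval_first[OF le, of "xrank (n-1)"] by simp
  then show ?case using Suc.IH Suc.prems step by simp
qed

lemma theta_formula_nonneg: "theta_formula k \<ge> 0"
proof -
  have "xrank (n-1+1) (k - int n - int (n-1)) + (\<Sum>i\<in>{k - int n-int (n-1)+1..k - int n}. xrank (n-1) i)
      \<le> xrank 1 (k - int n)"
    by (rule xrank_frobenius_chain) simp
  moreover have "k - int n-int (n-1)+1 = k-2*int n+2" using n2 by simp
  ultimately have "(\<Sum>i\<in>{k-2*int n+2..k - int n}. xrank (n-1) i) \<le> xrank 1 (k - int n)"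
    by (metis le_add2 le_trans)
  then have "(\<Sum>i\<in>{k-2*int n+2..k - int n}. (of_nat (xrank (n-1) i) :: rat)) \<le> of_nat (xrank 1 (k - int n))"
    by (simp only: of_nat_le_iff flip: of_nat_sum)
  then show ?thesis unfolding theta_formula_def by simp
qed

lemma eta_formula_vanish:
  "(\<And>j. k + 1 - int n \<le> j \<Longrightarrow> j \<le> k - 1 \<Longrightarrow> gdim M j = 0) \<Longrightarrow> eta_formula k = 0"
  unfolding eta_formula_def using n2 by (simp add: xnull_zero xrank_zero)

lemma theta_formula_vanish:
  "(\<And>j. k - 2 * int n + 2 \<le> j \<Longrightarrow> j \<le> k - int n \<Longrightarrow> gdim M j = 0) \<Longrightarrow> theta_formula k = 0"
  unfolding theta_formula_def using n2 by (simp add: xrank_zero)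

lemma eta_betti_step: "eta k (betti n M) - eta (k - 1) (betti n M) = betti n M 1 k - betti n M 2 (k + 1)"
  using rsum_atMost_step[OF betti_row_finite, of 1 k] rsum_atMost_step[OF betti_row_finite, of 2 "k+1"]
  unfolding eta_def by simp

lemma theta_betti_step:
  "theta n k (betti n M) - theta n (k - 1) (betti n M) = betti n M 2 k - betti n M 1 (k - int n + 1)"
  using rsum_atMost_step[OF betti_row_finite, of 1 "k - int n + 1"]
    rsum_atMost_step[OF betti_row_finite, of 2 k]
  unfolding theta_def by (simp add: algebra_simps)

lemma betti_row1_vanish: "gdim M (j - 1) = 0 \<Longrightarrow> betti n M 1 j = 0"
  using betti_vanish[of j 1] unfolding tdeg_1 .

lemma betti_row2_vanish: "gdim M (j - int n) = 0 \<Longrightarrow> betti n M 2 j = 0"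
  using betti_vanish[of j 2] by (simp add: tdeg_2)

text \<open>Both sides vanish far to the left and have the same increments.\<close>
lemma eta_betti: "eta k (betti n M) = eta_formula k"
proof -
  obtain L U where out: "\<And>j. j < L \<or> U < j \<Longrightarrow> gdim M j = 0" using module_bounds by blast
  let ?g = "\<lambda>k. eta k (betti n M) - eta_formula k"
  have "?g k = ?g (L - 1)"
  proof (rule int_fun_const)
    fix k show "?g k = ?g (k - 1)" using eta_betti_step[of k] eta_formula_step[of k] by linarith
  qed
  moreover have "rsum (betti n M) 1 {..L - 1} = 0"
    by (rule rsum_zero, rule betti_row1_vanish) (auto intro!: out)
  moreover have "rsum (betti n M) 2 {..L} = 0"
    by (rule rsum_zero, rule betti_row2_vanish) (use n2 in \<open>auto intro!: out\<close>)
  moreover have "eta_formula (L - 1) = 0"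
    by (rule eta_formula_vanish) (use out n2 in simp)
  ultimately show ?thesis by (simp add: eta_def)
qed

lemma theta_betti: "theta n k (betti n M) = theta_formula k"
proof -
  obtain L U where out: "\<And>j. j < L \<or> U < j \<Longrightarrow> gdim M j = 0" using module_bounds by blast
  let ?g = "\<lambda>k. theta n k (betti n M) - theta_formula k"
  have "?g k = ?g (L - 1)"
  proof (rule int_fun_const)
    fix k show "?g k = ?g (k - 1)" using theta_betti_step[of k] theta_formula_step[of k] by linarith
  qed
  moreover have "rsum (betti n M) 2 {..L - 1} = 0"
    by (rule rsum_zero, rule betti_row2_vanish) (use n2 in \<open>auto intro!: out\<close>)
  moreover have "rsum (betti n M) 1 {..L - 1 - int n + 1} = 0"
    by (rule rsum_zero, rule betti_row1_vanish) (use n2 in \<open>auto intro!: out\<close>)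
  moreover have "theta_formula (L - 1) = 0"
    by (rule theta_formula_vanish) (use out n2 in simp)
  ultimately show ?thesis by (simp add: theta_def)
qed

text \<open>Far to the right eta_infinity equals eta_k, whose closed form vanishes there.\<close>
lemma eta_inf_betti: "eta_inf (betti n M) = 0"
proof -
  obtain L U where out: "\<And>j. j < L \<or> U < j \<Longrightarrow> gdim M j = 0" using module_bounds by blast
  let ?k = "U + int n"
  have "rsum (betti n M) 1 UNIV = rsum (betti n M) 1 {..?k}"
    by (rule rsum_UNIV_eq_atMost, rule betti_row1_vanish) (use n2 in \<open>auto intro!: out\<close>)
  moreover have "rsum (betti n M) 2 UNIV = rsum (betti n M) 2 {..?k+1}"
    by (rule rsum_UNIV_eq_atMost, rule betti_row2_vanish) (auto intro!: out)
  ultimately have "eta_inf (betti n M) = eta ?k (betti n M)" by (simp add: eta_inf_def eta_def)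
  also have "\<dots> = eta_formula ?k" by (rule eta_betti)
  also have "\<dots> = 0" by (rule eta_formula_vanish) (simp add: out)
  finally show ?thesis .
qed

lemma betti_in_Fcone: "betti n M \<in> Fcone n"
proof -
  have "alpha n 0 k (betti n M) \<ge> 0" for k
    unfolding alpha_def add_0 betti_row0[of k] betti_row2[of "k + int n"] by simp
  moreover have "alpha n i k (betti n M) = 0" if "i \<ge> 1" for i k
    unfolding alpha_def betti_periodic[OF that] by simp
  moreover have "betti n M \<in> Vspace"
    using betti_row_finite by (simp add: Vspace_def row_supp_def)
  ultimately show ?thesis unfolding Fcone_def
    using eta_inf_betti eta_betti theta_betti eta_formula_nonneg theta_formula_nonneg
    by (auto simp: betti_def)
qed

end

lemma pos_mono: "S \<subseteq> T \<Longrightarrow> pos S \<subseteq> pos T"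
  unfolding pos_def by blast

lemma pos_zero: "(\<lambda>i j. 0) \<in> pos S"
  unfolding pos_def by (rule CollectI, rule exI[of _ "{}"]) auto

lemma pos_base: "s \<in> S \<Longrightarrow> s \<in> pos S"
  unfolding pos_def by (rule CollectI, rule exI[of _ "{s}"], rule exI[of _ "\<lambda>_. 1"]) auto

lemma pos_add:
  assumes v: "v \<in> pos S" and w: "w \<in> pos S"
  shows "(\<lambda>i j. v i j + w i j) \<in> pos S"
proof -
  obtain A c where A: "finite A" "A \<subseteq> S" "\<forall>s\<in>A. c s \<ge> 0" "v = (\<lambda>i j. \<Sum>s\<in>A. c s * s i j)"
    using v unfolding pos_def by blast
  obtain B d where B: "finite B" "B \<subseteq> S" "\<forall>s\<in>B. d s \<ge> 0" "w = (\<lambda>i j. \<Sum>s\<in>B. d s * s i j)"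
    using w unfolding pos_def by blast
  let ?e = "\<lambda>s. (if s \<in> A then c s else 0) + (if s \<in> B then d s else 0)"
  have A_ext: "(\<Sum>s\<in>A \<union> B. (if s \<in> A then c s else 0) * s i j) = (\<Sum>s\<in>A. c s * s i j)" for i j
    by (rule sum.mono_neutral_cong_right) (use A B in auto)
  have B_ext: "(\<Sum>s\<in>A \<union> B. (if s \<in> B then d s else 0) * s i j) = (\<Sum>s\<in>B. d s * s i j)" for i j
    by (rule sum.mono_neutral_cong_right) (use A B in auto)
  have "(\<lambda>i j. v i j + w i j) = (\<lambda>i j. \<Sum>s\<in>A \<union> B. ?e s * s i j)"
    unfolding A(4) B(4) A_ext[symmetric] B_ext[symmetric] by (simp add: distrib_right sum.distrib)
  moreover have "\<forall>s\<in>A \<union> B. ?e s \<ge> 0" using A(3) B(3) by auto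
  ultimately show ?thesis unfolding pos_def mem_Collect_eq
    by (intro exI[of _ "A \<union> B"] exI[of _ ?e] conjI) (use A B in auto)
qed

lemma pos_smult:
  assumes v: "v \<in> pos S" and a: "a \<ge> 0"
  shows "(\<lambda>i j. a * v i j) \<in> pos S"
proof -
  obtain A c where A: "finite A" "A \<subseteq> S" "\<forall>s\<in>A. c s \<ge> 0" "v = (\<lambda>i j. \<Sum>s\<in>A. c s * s i j)"
    using v unfolding pos_def by blast
  have "(\<lambda>i j. a * v i j) = (\<lambda>i j. \<Sum>s\<in>A. (a * c s) * s i j)"
    using A(4) by (auto simp: sum_distrib_left mult.assoc)
  moreover have "\<forall>s\<in>A. a * c s \<ge> 0" using A(3) a by auto
  ultimately show ?thesis unfolding pos_def mem_Collect_eq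
    by (intro exI[of _ A] exI[of _ "\<lambda>s. a * c s"] conjI) (use A in auto)
qed

lemma pos_sum:
  assumes "finite J" "\<And>j. j \<in> J \<Longrightarrow> f j \<ge> 0" "\<And>j. j \<in> J \<Longrightarrow> g j \<in> S"
  shows "(\<lambda>i k. \<Sum>j\<in>J. f j * g j i k) \<in> pos S"
  using assms
proof (induction J rule: finite_induct)
  case empty then show ?case using pos_zero by simp
next
  case (insert x F)
  have "(\<lambda>i k. f x * g x i k + (\<Sum>j\<in>F. f j * g j i k)) \<in> pos S"
    by (rule pos_add) (use insert in \<open>auto intro: pos_smult pos_base\<close>)
  then show ?case using insert by simp
qed

lemma pos_least_cone:
  assumes zero: "(\<lambda>i j. 0) \<in> C"
    and add: "\<And>v w. v \<in> C \<Longrightarrow> w \<in> C \<Longrightarrow> (\<lambda>i j. v i j + w i j) \<in> C"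
    and smult: "\<And>a v. a \<ge> 0 \<Longrightarrow> v \<in> C \<Longrightarrow> (\<lambda>i j. a * v i j) \<in> C"
    and S: "S \<subseteq> C"
  shows "pos S \<subseteq> C"
proof
  fix v assume "v \<in> pos S"
  then obtain A c where A: "finite A" "A \<subseteq> S" "\<forall>s\<in>A. c s \<ge> 0" "v = (\<lambda>i j. \<Sum>s\<in>A. c s * s i j)"
    unfolding pos_def by blast
  have "A \<subseteq> S \<Longrightarrow> (\<forall>s\<in>A. c s \<ge> 0) \<Longrightarrow> (\<lambda>i j. \<Sum>s\<in>A. c s * s i j) \<in> C"
    using A(1)
  proof (induction A rule: finite_induct)
    case empty then show ?case using zero by simp
  next
    case (insert x F)
    have "(\<lambda>i j. c x * x i j) \<in> C" using insert S by (intro smult) auto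
    moreover have "(\<lambda>i j. \<Sum>s\<in>F. c s * s i j) \<in> C" using insert by auto
    ultimately have "(\<lambda>i j. c x * x i j + (\<Sum>s\<in>F. c s * s i j)) \<in> C" by (rule add)
    then show ?case using insert by simp
  qed
  then show "v \<in> C" using A by simp
qed

text \<open>F is a convex cone: all defining conditions are linear (in)equalities.\<close>
lemma Fcone_combination:
  assumes v: "v \<in> Fcone n" and w: "w \<in> Fcone n" and a: "a \<ge> 0" and b: "b \<ge> 0"
  shows "(\<lambda>i j. a * v i j + b * w i j) \<in> Fcone n"
proof -
  let ?u = "\<lambda>i j. a * v i j + b * w i j"
  have fv: "finite (row_supp v i)" and fw: "finite (row_supp w i)" for i
    using v w by (auto simp: Fcone_def Vspace_def row_supp_def)
  have rs: "rsum ?u i S = a * rsum v i S + b * rsum w i S" for i S by (rule rsum_linear[OF fv fw])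
  have "row_supp ?u i \<subseteq> row_supp v i \<union> row_supp w i" for i by (auto simp: row_supp_def)
  then have "finite (row_supp ?u i)" for i using fv fw by (meson finite_UnI finite_subset)
  then have V: "?u \<in> Vspace" by (simp add: Vspace_def row_supp_def)
  have al: "alpha n i k ?u = a * alpha n i k v + b * alpha n i k w" for i k
    by (simp add: alpha_def algebra_simps)
  have th: "theta n k ?u = a * theta n k v + b * theta n k w" for k
    by (simp add: theta_def rs algebra_simps)
  have et: "eta k ?u = a * eta k v + b * eta k w" for k
    by (simp add: eta_def rs algebra_simps)
  have ei: "eta_inf ?u = a * eta_inf v + b * eta_inf w"
    by (simp add: eta_inf_def rs algebra_simps)
  show ?thesis using v w a b V unfolding Fcone_def mem_Collect_eq al th et ei
    by simp
qed

lemma Fcone_zero: "(\<lambda>i j. 0) \<in> Fcone n"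
  by (auto simp: Fcone_def Vspace_def alpha_def theta_def eta_def eta_inf_def rsum_def)

lemma pos_subset_Fcone: "S \<subseteq> Fcone n \<Longrightarrow> pos S \<subseteq> Fcone n"
  by (rule pos_least_cone[OF Fcone_zero])
    (use Fcone_combination[of _ n _ 1 1] Fcone_combination[of _ n _ _ 0] in auto)

lemma FconeD:
  assumes "v \<in> Fcone n"
  shows Fcone_row_finite: "finite (row_supp v i)"
    and Fcone_nonneg: "i \<le> 2 \<Longrightarrow> v i j \<ge> 0"
    and Fcone_alpha0: "v 2 (k + int n) \<le> v 0 k"
    and Fcone_theta: "theta n k v \<ge> 0"
    and Fcone_eta: "eta k v \<ge> 0"
    and Fcone_alpha: "1 \<le> i \<Longrightarrow> alpha n i k v = 0"
    and Fcone_eta_inf: "rsum v 1 UNIV = rsum v 2 UNIV"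
proof -
  have V: "v \<in> Vspace" and nn: "\<forall>i\<le>2. \<forall>j. v i j \<ge> 0" and a0: "\<forall>k. alpha n 0 k v \<ge> 0"
    and th: "\<forall>k. theta n k v \<ge> 0" and et: "\<forall>k. eta k v \<ge> 0"
    and a: "\<forall>i\<ge>1. \<forall>k. alpha n i k v = 0" and ei: "eta_inf v = 0"
    using assms unfolding Fcone_def by blast+
  show "finite (row_supp v i)" using V by (simp add: Vspace_def row_supp_def)
  show "i \<le> 2 \<Longrightarrow> v i j \<ge> 0" using nn by blast
  show "v 2 (k + int n) \<le> v 0 k" using a0 unfolding alpha_def by (simp add: numeral_2_eq_2)
  show "theta n k v \<ge> 0" "eta k v \<ge> 0" using th et by blast+
  show "1 \<le> i \<Longrightarrow> alpha n i k v = 0" using a by blast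
  show "rsum v 1 UNIV = rsum v 2 UNIV" using ei by (simp add: eta_inf_def)
qed

section \<open>Decomposing elements of F into points pi_d\<close>

lemma rsum_pi_seq:
  "rsum (pi_seq d) i S = (case d i of None \<Rightarrow> 0 | Some j \<Rightarrow> if j \<in> S then 1 else 0)"
proof (cases "d i")
  case None then show ?thesis by (simp add: rsum_def pi_seq_def)
next
  case (Some j)
  have "{j' \<in> S. pi_seq d i j' \<noteq> 0} = (if j \<in> S then {j} else {})"
    using Some by (auto simp: pi_seq_def)
  then show ?thesis using Some unfolding rsum_def by (simp add: pi_seq_def)
qed

lemma pi_seq_row_finite: "finite (row_supp (pi_seq d) i)"
proof -
  have "row_supp (pi_seq d) i \<subseteq> (case d i of None \<Rightarrow> {} | Some j \<Rightarrow> {j})"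
    by (auto simp: row_supp_def pi_seq_def split: option.splits)
  then show ?thesis by (rule finite_subset) (simp split: option.splits)
qed

definition periodic_seq :: "nat \<Rightarrow> int \<Rightarrow> int \<Rightarrow> nat \<Rightarrow> int" where
  "periodic_seq n d0 d1 i = (if even i then d0 else d1) + int (i div 2) * int n"

definition periodic_pi :: "nat \<Rightarrow> int \<Rightarrow> int \<Rightarrow> vmat" where
  "periodic_pi n d0 d1 = pi_seq (\<lambda>i. Some (periodic_seq n d0 d1 i))"

lemma periodic_seq_simps:
  "periodic_seq n d0 d1 0 = d0" "periodic_seq n d0 d1 1 = d1" "periodic_seq n d0 d1 (Suc 0) = d1"
  "periodic_seq n d0 d1 2 = d0 + int n" "periodic_seq n d0 d1 (i + 2) = periodic_seq n d0 d1 i + int n"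
  by (auto simp: periodic_seq_def algebra_simps)

lemma periodic_seq_Suc_Suc: "periodic_seq n d0 d1 (Suc (Suc i)) = periodic_seq n d0 d1 i + int n"
  using periodic_seq_simps(5) by simp

lemma periodic_pi_entry: "periodic_pi n d0 d1 i j = (if periodic_seq n d0 d1 i = j then 1 else 0)"
  by (simp add: periodic_pi_def pi_seq_def)

lemma rsum_periodic_pi:
  "rsum (periodic_pi n d0 d1) i S = (if periodic_seq n d0 d1 i \<in> S then 1 else 0)"
  by (simp add: periodic_pi_def rsum_pi_seq)

lemma periodic_pi_in_generators:
  "d0 < d1 \<Longrightarrow> d1 < d0 + int n \<Longrightarrow> periodic_pi n d0 d1 \<in> {pi_seq d | d. degree_seq n d}"
  unfolding degree_seq_def periodic_pi_def
  by (auto simp: periodic_seq_def algebra_simps intro!: exI[of _ "periodic_seq n d0 d1"])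

text \<open>Rows 1 and 2 of an element of F are both zero or both nonzero (eta_inf = 0).\<close>
lemma Fcone_rows12_empty_iff:
  assumes v: "v \<in> Fcone n"
  shows "row_supp v 1 = {} \<longleftrightarrow> row_supp v 2 = {}"
proof -
  have zero_iff: "rsum v i UNIV = 0 \<longleftrightarrow> row_supp v i = {}" if "i \<le> 2" for i
  proof
    assume "rsum v i UNIV = 0"
    then have "v i j \<le> 0" for j
      using rsum_ge_entry[OF Fcone_nonneg[OF v that] Fcone_row_finite[OF v], of j UNIV] by simp
    then show "row_supp v i = {}"
      using Fcone_nonneg[OF v that] by (force simp: row_supp_def intro: antisym)
  qed (auto intro: rsum_zero simp: row_supp_def)
  show ?thesis using zero_iff[of 1] zero_iff[of 2] Fcone_eta_inf[OF v] by simp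
qed

lemma row_min_entry:
  assumes fin: "finite (row_supp v i)" and ne: "row_supp v i \<noteq> {}" and nn: "\<And>j. v i j \<ge> 0"
  shows "0 < v i (Min (row_supp v i))" and "\<And>j. j < Min (row_supp v i) \<Longrightarrow> v i j = 0"
proof -
  have "Min (row_supp v i) \<in> row_supp v i" by (rule Min_in[OF fin ne])
  then show "0 < v i (Min (row_supp v i))" using nn by (simp add: row_supp_def order_less_le)
next
  fix j assume "j < Min (row_supp v i)"
  then have "j \<notin> row_supp v i" using Min_le[OF fin] by force
  then show "v i j = 0" by (simp add: row_supp_def)
qed

text \<open>If d1, d2 are the first degrees in rows 1, 2 of v in F, then d1 < d2 < d1 + n:
  the first by eta_(d2 - 1) \<ge> 0, the second by theta_(d1 + n - 1) \<ge> 0.\<close>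
lemma Fcone_first_degrees:
  assumes v: "v \<in> Fcone n"
    and d1: "0 < v 1 d1" "\<And>j. j < d1 \<Longrightarrow> v 1 j = 0"
    and d2: "0 < v 2 d2" "\<And>j. j < d2 \<Longrightarrow> v 2 j = 0"
  shows "d1 < d2" and "d2 < d1 + int n"
proof -
  have "rsum v 1 {..d2 - 1} \<ge> rsum v 2 {..d2}"
    using Fcone_eta[OF v, of "d2 - 1"] by (simp add: eta_def)
  moreover have "rsum v 2 {..d2} \<ge> v 2 d2"
    by (rule rsum_ge_entry[OF Fcone_nonneg[OF v] Fcone_row_finite[OF v]]) simp_all
  ultimately have "rsum v 1 {..d2 - 1} \<noteq> 0" using d2 by simp
  then obtain j where "j \<le> d2 - 1" "v 1 j \<noteq> 0" using rsum_nonzero_witness by fastforce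
  then show "d1 < d2" using d1(2)[of j] by fastforce
next
  have "rsum v 2 {..d1 + int n - 1} \<ge> rsum v 1 {..d1}"
    using Fcone_theta[OF v, of "d1 + int n - 1"] by (simp add: theta_def)
  moreover have "rsum v 1 {..d1} \<ge> v 1 d1"
    by (rule rsum_ge_entry[OF Fcone_nonneg[OF v] Fcone_row_finite[OF v]]) simp_all
  ultimately have "rsum v 2 {..d1 + int n - 1} \<noteq> 0" using d1 by simp
  then obtain j where "j \<le> d1 + int n - 1" "v 2 j \<noteq> 0" using rsum_nonzero_witness by fastforce
  then show "d2 < d1 + int n" using d2(2)[of j] by fastforce
qed

lemma rsum_subtract_periodic_pi:
  assumes "finite (row_supp v i)"
  shows "rsum (\<lambda>i j. v i j - c * periodic_pi n d0 d1 i j) i S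
    = rsum v i S - (if periodic_seq n d0 d1 i \<in> S then c else 0)"
proof -
  have "finite (row_supp (periodic_pi n d0 d1) i)" unfolding periodic_pi_def by (rule pi_seq_row_finite)
  from rsum_linear[OF assms this, where a=1 and b="-c" and S=S] show ?thesis by (simp add: rsum_periodic_pi)
qed

text \<open>Let d1, d2 be the first degrees of rows 1, 2 of v in F and 0 < c \<le> v_(1,d1), v_(2,d2).
  Subtracting c pi_d for d = (d2 - n, d1, d2, ...) keeps theta_k and eta_k nonnegative: the
  only critical k are those where the sum defining theta_k (eta_k) contains d2 (d1) but its
  negative part does not reach d1 (d2); there the negative part is zero.\<close>
lemma theta_subtract_periodic_pi:
  assumes v: "v \<in> Fcone n" and d1: "\<And>j. j < d1 \<Longrightarrow> v 1 j = 0" and c: "c \<le> v 2 d2" "0 < c"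
  shows "theta n k (\<lambda>i j. v i j - c * periodic_pi n (d2 - int n) d1 i j) \<ge> 0"
proof (cases "d2 \<le> k \<and> \<not> d1 \<le> k - int n + 1")
  case True
  have "rsum v 1 {..k - int n + 1} = 0" by (rule rsum_zero) (use True d1 in auto)
  moreover have "rsum v 2 {..k} \<ge> v 2 d2"
    by (rule rsum_ge_entry[OF Fcone_nonneg[OF v] Fcone_row_finite[OF v]]) (use True in simp_all)
  ultimately show ?thesis using True c
    by (simp add: theta_def rsum_subtract_periodic_pi[OF Fcone_row_finite[OF v]] periodic_seq_simps)
next
  case False
  then show ?thesis using Fcone_theta[OF v, of k] c
    by (auto simp: theta_def rsum_subtract_periodic_pi[OF Fcone_row_finite[OF v]] periodic_seq_simps)
qed

lemma eta_subtract_periodic_pi: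
  assumes v: "v \<in> Fcone n" and d2: "\<And>j. j < d2 \<Longrightarrow> v 2 j = 0" and c: "c \<le> v 1 d1" "0 < c"
  shows "eta k (\<lambda>i j. v i j - c * periodic_pi n (d2 - int n) d1 i j) \<ge> 0"
proof (cases "d1 \<le> k \<and> \<not> d2 \<le> k + 1")
  case True
  have "rsum v 2 {..k + 1} = 0" by (rule rsum_zero) (use True d2 in auto)
  moreover have "rsum v 1 {..k} \<ge> v 1 d1"
    by (rule rsum_ge_entry[OF Fcone_nonneg[OF v] Fcone_row_finite[OF v]]) (use True in simp_all)
  ultimately show ?thesis using True c
    by (simp add: eta_def rsum_subtract_periodic_pi[OF Fcone_row_finite[OF v]] periodic_seq_simps)
next
  case False
  then show ?thesis using Fcone_eta[OF v, of k] c
    by (auto simp: eta_def rsum_subtract_periodic_pi[OF Fcone_row_finite[OF v]] periodic_seq_simps)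
qed

lemma Fcone_subtract_periodic_pi:
  assumes v: "v \<in> Fcone n"
    and d1: "\<And>j. j < d1 \<Longrightarrow> v 1 j = 0" and d2: "\<And>j. j < d2 \<Longrightarrow> v 2 j = 0"
    and c: "0 < c" "c \<le> v 1 d1" "c \<le> v 2 d2"
  shows "(\<lambda>i j. v i j - c * periodic_pi n (d2 - int n) d1 i j) \<in> Fcone n"
proof -
  let ?p = "periodic_pi n (d2 - int n) d1"
  let ?v' = "\<lambda>i j. v i j - c * ?p i j"
  have "?v' \<in> Vspace"
  proof -
    have "row_supp ?v' i \<subseteq> row_supp v i \<union> row_supp ?p i" for i by (auto simp: row_supp_def)
    moreover have "finite (row_supp ?p i)" for i unfolding periodic_pi_def by (rule pi_seq_row_finite)
    ultimately show ?thesis using Fcone_row_finite[OF v]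
      by (simp add: Vspace_def row_supp_def) (meson finite_UnI finite_subset)
  qed
  moreover have "?v' i j \<ge> 0" if "i \<le> 2" for i j
  proof -
    have "v 0 (d2 - int n) \<ge> c" using Fcone_alpha0[OF v, of "d2 - int n"] c by simp
    moreover have "i = 0 \<or> i = 1 \<or> i = 2" using that by auto
    ultimately show ?thesis using Fcone_nonneg[OF v that, of j] c
      by (auto simp: periodic_pi_entry periodic_seq_simps)
  qed
  moreover have "alpha n i k ?v' = alpha n i k v" for i k
    by (simp add: alpha_def periodic_pi_entry periodic_seq_Suc_Suc)
  moreover have "eta_inf ?v' = 0"
    using Fcone_eta_inf[OF v]
    by (simp add: eta_inf_def rsum_subtract_periodic_pi[OF Fcone_row_finite[OF v]] periodic_seq_simps)
  ultimately show ?thesis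
    using v theta_subtract_periodic_pi[OF v d1 c(3,1)] eta_subtract_periodic_pi[OF v d2 c(2,1)]
    unfolding Fcone_def mem_Collect_eq by auto
qed

lemma Fcone_peel:
  assumes v: "v \<in> Fcone n" and ne: "row_supp v 1 \<noteq> {}"
  obtains v' c d0 d1 where "v' \<in> Fcone n" "c > 0" "d0 < d1" "d1 < d0 + int n"
    "v = (\<lambda>i j. v' i j + c * periodic_pi n d0 d1 i j)"
    "card (row_supp v' 1) + card (row_supp v' 2) < card (row_supp v 1) + card (row_supp v 2)"
proof -
  have ne2: "row_supp v 2 \<noteq> {}" using ne Fcone_rows12_empty_iff[OF v] by blast
  define d1 where "d1 = Min (row_supp v 1)"
  define d2 where "d2 = Min (row_supp v 2)"
  note first1 = row_min_entry[OF Fcone_row_finite[OF v] ne Fcone_nonneg[OF v], folded d1_def]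
  note first2 = row_min_entry[OF Fcone_row_finite[OF v] ne2 Fcone_nonneg[OF v], folded d2_def]
  define c where "c = min (v 1 d1) (v 2 d2)"
  define v' where "v' = (\<lambda>i j. v i j - c * periodic_pi n (d2 - int n) d1 i j)"
  have c: "0 < c" "c \<le> v 1 d1" "c \<le> v 2 d2" using first1 first2 by (auto simp: c_def)
  have v': "v' \<in> Fcone n" unfolding v'_def
    using Fcone_subtract_periodic_pi[OF v first1(2) first2(2) c] by simp
  have entries: "v' 1 j = v 1 j - (if j = d1 then c else 0)" "v' 2 j = v 2 j - (if j = d2 then c else 0)"
    for j by (simp_all add: v'_def periodic_pi_entry periodic_seq_simps)
  have fin: "finite (row_supp v i)" for i by (rule Fcone_row_finite[OF v])
  have d_in: "d1 \<in> row_supp v 1" "d2 \<in> row_supp v 2" using first1 first2 by (auto simp: row_supp_def)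
  then have sub: "row_supp v' 1 \<subseteq> row_supp v 1" "row_supp v' 2 \<subseteq> row_supp v 2"
    by (auto simp: row_supp_def entries entries[unfolded One_nat_def] split: if_splits)
  have "row_supp v' 1 \<subset> row_supp v 1 \<or> row_supp v' 2 \<subset> row_supp v 2"
  proof (cases "c = v 1 d1")
    case True
    then have "d1 \<notin> row_supp v' 1" by (simp add: row_supp_def entries[unfolded One_nat_def])
    then show ?thesis using sub d_in by blast
  next
    case False
    then have "c = v 2 d2" by (simp add: c_def min_def split: if_splits)
    then have "d2 \<notin> row_supp v' 2" by (simp add: row_supp_def entries)
    then show ?thesis using sub d_in by blast
  qed
  then have "card (row_supp v' 1) + card (row_supp v' 2) < card (row_supp v 1) + card (row_supp v 2)"
    using psubset_card_mono[OF fin] card_mono[OF fin sub(1)] card_mono[OF fin sub(2)]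
    by (auto intro: add_le_less_mono add_less_le_mono)
  moreover have "d2 - int n < d1" "d1 < d2 - int n + int n"
    using Fcone_first_degrees[OF v first1 first2] by auto
  moreover have "v = (\<lambda>i j. v' i j + c * periodic_pi n (d2 - int n) d1 i j)"
    by (simp add: v'_def)
  ultimately show thesis using that v' c by blast
qed

text \<open>If rows 1 and 2 of v in F vanish then all rows i \<ge> 1 vanish (alpha_(i,k) = 0), and v
  is a nonnegative combination of the points pi_d for d = (j, oo, oo, ...).\<close>
lemma Fcone_row0_in_Dcone:
  assumes v: "v \<in> Fcone n" and rows12: "row_supp v 1 = {}" "row_supp v 2 = {}"
  shows "v \<in> Dcone n"
proof -
  have rows: "v i j = 0" if "i \<ge> 1" for i j
    using that
  proof (induction i arbitrary: j rule: less_induct)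
    case (less i)
    show ?case
    proof (cases "i \<le> 2")
      case True
      then have "i = 1 \<or> i = 2" using less.prems by auto
      then show ?thesis using rows12 by (auto simp: row_supp_def)
    next
      case False
      have e: "i - 2 + 2 = i" using False by simp
      have "v i j = v (i - 2) (j - int n)"
        using Fcone_alpha[OF v, of "i - 2" "j - int n"] False unfolding alpha_def e by simp
      then show ?thesis using less.IH[of "i - 2"] False by simp
    qed
  qed
  let ?J = "row_supp v 0"
  let ?g = "\<lambda>j. pi_seq (\<lambda>i. if i = 0 then Some j else None)"
  have "v = (\<lambda>i k. \<Sum>j\<in>?J. v 0 j * ?g j i k)"
  proof (intro ext)
    fix i k
    show "v i k = (\<Sum>j\<in>?J. v 0 j * ?g j i k)"
    proof (cases "i = 0")
      case True
      have "(\<Sum>j\<in>?J. v 0 j * ?g j i k) = (\<Sum>j\<in>?J. if j = k then v 0 j else 0)"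
        using True by (intro sum.cong) (auto simp: pi_seq_def)
      also have "\<dots> = v 0 k"
        using Fcone_row_finite[OF v, of 0] by (simp add: sum.delta' row_supp_def)
      finally show ?thesis using True by simp
    qed (simp add: rows pi_seq_def)
  qed
  also have "\<dots> \<in> Dcone n" unfolding Dcone_def
    by (rule pos_sum[OF Fcone_row_finite[OF v]])
      (use Fcone_nonneg[OF v] in \<open>auto simp: degree_seq_def\<close>)
  finally show ?thesis .
qed

lemma Fcone_subset_Dcone: "Fcone n \<subseteq> Dcone n"
proof
  fix v assume "v \<in> Fcone n"
  then show "v \<in> Dcone n"
  proof (induction "card (row_supp v 1) + card (row_supp v 2)" arbitrary: v rule: less_induct)
    case (less v)
    show ?case
    proof (cases "row_supp v 1 = {}")
      case True then show ?thesis
        using Fcone_row0_in_Dcone[OF less.prems] Fcone_rows12_empty_iff[OF less.prems] by blast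
    next
      case False
      obtain v' c d0 d1 where peel: "v' \<in> Fcone n" "c > 0" "d0 < d1" "d1 < d0 + int n"
        "v = (\<lambda>i j. v' i j + c * periodic_pi n d0 d1 i j)"
        "card (row_supp v' 1) + card (row_supp v' 2) < card (row_supp v 1) + card (row_supp v 2)"
        by (rule Fcone_peel[OF less.prems False])
      have "v' \<in> Dcone n" using less.hyps[OF peel(6) peel(1)] .
      moreover have "periodic_pi n d0 d1 \<in> Dcone n"
        unfolding Dcone_def by (rule pos_base[OF periodic_pi_in_generators[OF peel(3,4)]])
      ultimately show ?thesis unfolding peel(5) Dcone_def
        by (intro pos_add pos_smult) (use peel(2) in auto)
    qed
  qed
qed

section \<open>Every pi_d is the Betti diagram of a cyclic module\<close>

text \<open>The cyclic module k[x]/(x^a), generated in degree d0: one-dimensional in degrees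
  d0, ..., d0 + a - 1, with x acting as the identity between consecutive nonzero pieces.\<close>
definition cyc_dim :: "int \<Rightarrow> nat \<Rightarrow> int \<Rightarrow> nat" where
  "cyc_dim d0 a j = (if d0 \<le> j \<and> j < d0 + int a then 1 else 0)"

definition cyclic_module :: "int \<Rightarrow> nat \<Rightarrow> 'k::field grmod" where
  "cyclic_module d0 a = (cyc_dim d0 a,
     \<lambda>j. if d0 \<le> j \<and> j + 1 < d0 + int a then 1\<^sub>m 1 else 0\<^sub>m (cyc_dim d0 a (j+1)) (cyc_dim d0 a j))"

lemma gdim_cyclic_module: "gdim (cyclic_module d0 a) = cyc_dim d0 a"
  by (rule ext) (simp add: cyclic_module_def gdim_def)

lemma xmat_cyclic_module: "xmat (cyclic_module d0 a :: 'k::field grmod) j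
  = (if d0 \<le> j \<and> j + 1 < d0 + int a then 1\<^sub>m 1 else 0\<^sub>m (cyc_dim d0 a (j+1)) (cyc_dim d0 a j))"
  by (simp add: cyclic_module_def xmat_def)

lemma xmat_cyclic_module_carrier:
  "xmat (cyclic_module d0 a :: 'k::field grmod) j \<in> carrier_mat (cyc_dim d0 a (j+1)) (cyc_dim d0 a j)"
  by (auto simp: xmat_cyclic_module cyc_dim_def)

lemma xpow_cyclic_module: "xpow (cyclic_module d0 a :: 'k::field grmod) j r =
  (if d0 \<le> j \<and> j + int r < d0 + int a then 1\<^sub>m 1 else 0\<^sub>m (cyc_dim d0 a (j + int r)) (cyc_dim d0 a j))"
proof (induction r)
  case 0
  have "(1\<^sub>m 0 :: 'k mat) = 0\<^sub>m 0 0" by (rule eq_matI) auto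
  then show ?case by (auto simp: gdim_cyclic_module cyc_dim_def)
next
  case (Suc r)
  let ?M = "cyclic_module d0 a :: 'k grmod"
  have e: "j + int (Suc r) = j + int r + 1" by simp
  show ?case
  proof (cases "d0 \<le> j \<and> j + int r + 1 < d0 + int a")
    case True
    then show ?thesis unfolding e using Suc.IH by (simp add: xmat_cyclic_module)
  next
    case F: False
    show ?thesis
    proof (cases "d0 \<le> j \<and> j + int r < d0 + int a")
      case True
      then have dims: "cyc_dim d0 a j = 1" "cyc_dim d0 a (j + int r) = 1" by (auto simp: cyc_dim_def)
      have "xpow ?M j (Suc r) = 0\<^sub>m (cyc_dim d0 a (j + int r + 1)) 1 * 1\<^sub>m 1"
        using Suc.IH True F dims by (simp add: xmat_cyclic_module)
      then show ?thesis unfolding e using F dims by auto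
    next
      case False
      have "xpow ?M j (Suc r) = xmat ?M (j + int r) * 0\<^sub>m (cyc_dim d0 a (j + int r)) (cyc_dim d0 a j)"
        by (simp only: xpow.simps Suc.IH if_not_P[OF False])
      also have "\<dots> = 0\<^sub>m (cyc_dim d0 a (j + int r + 1)) (cyc_dim d0 a j)"
        using xmat_cyclic_module_carrier[of d0 a "j + int r", where 'k='k] by simp
      finally show ?thesis unfolding e using F by auto
    qed
  qed
qed

lemma fg_cyclic_module:
  assumes "a \<le> n" shows "fg_graded_module n (cyclic_module d0 a :: 'k::field grmod)"
proof -
  have "{j. cyc_dim d0 a j \<noteq> 0} \<subseteq> {d0..<d0 + int a}" by (auto simp: cyc_dim_def)
  then have "finite {j. cyc_dim d0 a j \<noteq> 0}" by (rule finite_subset) simp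
  then show ?thesis using assms unfolding fg_graded_module_def gdim_cyclic_module
    by (auto simp: xmat_cyclic_module_carrier xpow_cyclic_module)
qed

lemma betti_cyclic_module:
  assumes n2: "n \<ge> 2" and a: "1 \<le> a" "a \<le> n"
  shows "betti n (cyclic_module d0 a :: 'k::field grmod) 0 j = (if j = d0 then 1 else 0)"
    and "betti n (cyclic_module d0 a :: 'k grmod) 1 j = (if a < n \<and> j = d0 + int a then 1 else 0)"
    and "betti n (cyclic_module d0 a :: 'k grmod) 2 j = (if a < n \<and> j = d0 + int n then 1 else 0)"
proof -
  interpret G: graded_module n "cyclic_module d0 a :: 'k grmod"
    by unfold_locales (use fg_cyclic_module a n2 in auto)
  have rk: "G.xrank r j' = (if d0 \<le> j' \<and> j' + int r < d0 + int a then 1 else 0)" for r j'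
    by (simp add: G.xrank_def xpow_cyclic_module img_dim_one img_dim_zero)
  have nn: "int (n - 1) = int n - 1" using n2 by simp
  show "betti n (cyclic_module d0 a :: 'k::field grmod) 0 j = (if j = d0 then 1 else 0)"
    using G.betti_row0[of j] a unfolding rk gdim_cyclic_module cyc_dim_def by auto
  show "betti n (cyclic_module d0 a :: 'k grmod) 1 j = (if a < n \<and> j = d0 + int a then 1 else 0)"
    using G.betti_row1[of j] a n2 unfolding rk gdim_cyclic_module cyc_dim_def nn by auto
  show "betti n (cyclic_module d0 a :: 'k grmod) 2 j = (if a < n \<and> j = d0 + int n then 1 else 0)"
    using G.betti_row2[of j] a n2 unfolding rk gdim_cyclic_module cyc_dim_def nn by auto
qed

lemma vmat_eq_by_rows012:
  fixes f g :: vmat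
  assumes "\<And>j. f 0 j = g 0 j" "\<And>j. f 1 j = g 1 j" "\<And>j. f 2 j = g 2 j"
    and pf: "\<And>i k. i \<ge> 1 \<Longrightarrow> f (i+2) (k + int n) = f i k"
    and pg: "\<And>i k. i \<ge> 1 \<Longrightarrow> g (i+2) (k + int n) = g i k"
  shows "f = g"
proof -
  have "f i k = g i k" for i k
  proof (induction i arbitrary: k rule: less_induct)
    case (less i)
    show ?case
    proof (cases "i \<le> 2")
      case True
      then have "i = 0 \<or> i = 1 \<or> i = 2" by auto
      then show ?thesis using assms(1-3) by auto
    next
      case False
      have e: "i - 2 + 2 = i" using False by simp
      have "f i k = f (i - 2) (k - int n)" using pf[of "i - 2" "k - int n"] False unfolding e by simp
      moreover have "g i k = g (i - 2) (k - int n)" using pg[of "i - 2" "k - int n"] False unfolding e by simp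
      ultimately show ?thesis using less.IH[of "i - 2"] False by simp
    qed
  qed
  then show ?thesis by (intro ext)
qed

text \<open>pi_d is the Betti diagram of k[x]/(x^a)(-d0), with a = d1 - d0, or a = n if d1 = oo.\<close>
lemma degree_seq_realized:
  assumes d: "degree_seq n d" and n2: "n \<ge> 2"
  shows "\<exists>M :: 'k::field grmod. fg_graded_module n M \<and> betti n M = pi_seq d"
  using d unfolding degree_seq_def
proof (elim disjE exE conjE)
  fix d0 assume d0: "d 0 = Some d0" and dn: "\<forall>i\<ge>1. d i = None"
  let ?M = "cyclic_module d0 n :: 'k grmod"
  have "betti n ?M = pi_seq d"
  proof (rule vmat_eq_by_rows012[where n=n])
    show "betti n ?M 0 j = pi_seq d 0 j" "betti n ?M 1 j = pi_seq d 1 j"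
      "betti n ?M 2 j = pi_seq d 2 j" for j
      using betti_cyclic_module[OF n2, of n d0 j] n2 d0 dn by (auto simp: pi_seq_def)
    show "betti n ?M (i+2) (k + int n) = betti n ?M i k" if "i \<ge> 1" for i k
      by (rule betti_periodic[OF that])
    show "pi_seq d (i+2) (k + int n) = pi_seq d i k" if "i \<ge> 1" for i k
      using dn that by (simp add: pi_seq_def)
  qed
  then show ?thesis using fg_cyclic_module[of n n d0] by blast
next
  fix e assume de: "\<forall>i. d i = Some (e i)" and e01: "e 0 < e 1" "e 1 < e 0 + int n"
    and ep: "\<forall>i. e (i + 2) - e i = int n"
  define a where "a = nat (e 1 - e 0)"
  have a: "1 \<le> a" "a < n" "int a = e 1 - e 0" using e01 by (auto simp: a_def)
  let ?M = "cyclic_module (e 0) a :: 'k grmod"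
  have p: "pi_seq d i j = (if e i = j then 1 else 0)" for i j using de by (simp add: pi_seq_def)
  have e2: "e 2 = e 0 + int n" using ep[rule_format, of 0] by (simp add: eval_nat_numeral)
  have "betti n ?M = pi_seq d"
  proof (rule vmat_eq_by_rows012[where n=n])
    show "betti n ?M 0 j = pi_seq d 0 j" "betti n ?M 1 j = pi_seq d 1 j"
      "betti n ?M 2 j = pi_seq d 2 j" for j
      using betti_cyclic_module[OF n2, of a "e 0" j] a e2 by (auto simp: p)
    show "betti n ?M (i+2) (k + int n) = betti n ?M i k" if "i \<ge> 1" for i k
      by (rule betti_periodic[OF that])
    show "pi_seq d (i+2) (k + int n) = pi_seq d i k" for i k
      using ep[rule_format, of i] by (auto simp: p)
  qed
  moreover have "fg_graded_module n ?M" using fg_cyclic_module[of a n "e 0"] a by simp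
  ultimately show ?thesis by blast
qed

theorem theorem3p4:
  assumes "n \<ge> 2"
  shows "BQ TYPE('k::field) n = Dcone n \<and> Dcone n = Fcone n"
proof -
  have BQ_F: "BQ TYPE('k) n \<subseteq> Fcone n"
    unfolding BQ_def
  proof (rule pos_subset_Fcone, safe)
    fix M :: "'k grmod" assume "fg_graded_module n M"
    then interpret graded_module n M by unfold_locales (use assms in auto)
    show "betti n M \<in> Fcone n" by (rule betti_in_Fcone)
  qed
  have D_BQ: "Dcone n \<subseteq> BQ TYPE('k) n"
    unfolding Dcone_def BQ_def
  proof (rule pos_mono, safe)
    fix d assume "degree_seq n d"
    then obtain M :: "'k grmod" where "fg_graded_module n M" "betti n M = pi_seq d"
      using degree_seq_realized[OF _ assms] by blast
    then show "\<exists>M. pi_seq d = betti n (M :: 'k grmod) \<and> fg_graded_module n M" by metis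
  qed
  show ?thesis using BQ_F D_BQ Fcone_subset_Dcone[of n] by blast
qed

end
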